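(* Let $G=(V,E)$ be a finite simple graph of order $n$ and let $T=n-1$. If $(s,x,y,z)$ is an optimal solution of the integer program with the constraints of the Infection Model $\mathrm{IM}(G,T)$ and objective "minimize $\sum_{v\in V}s_v+z$", then $C=\{v\in V\colon s_v=1\}$ is a zero forcing set of $G$ with $\mathrm{th}(G)=\mathrm{th}(G,C)=\sum_{v\in V}s_v+z$.
   Context: Zero forcing: under the standard color change rule a filled vertex $u$ can force a non-filled vertex $v$ if $v$ is the only non-filled neighbor of $u$; $C\subseteq V$ is a zero forcing set if, starting with $C$ filled and repeatedly forcing, all of $V$ becomes filled. The propagation time $\mathrm{pt}(G,C)$ is the smallest $t^*$ such that, starting from $C^{[0]}=C$ and setting $C^{[t]}=C^{[t-1]}\cup\{v\notin C^{[t-1]}\colon$ some $u\in C^{[t-1]}$ has $v$ as its only neighbor outside $C^{[t-1]}\}$, one has $C^{[t^*]}=V$ ($\infty$ if $C$ is not a zero forcing set). The throttling number of $C$ is $\mathrm{th}(G,C)=|C|+\mathrm{pt}(G,C)$ and $\mathrm{th}(G)=\min_{C\subseteq V}\mathrm{th}(G,C)$. $N(u)$ is the neighborhood of $u$. Infection Model constraints: let $A$ be the set of arcs containing both $(u,v)$ and $(v,u)$ for each edge $\{u,v\}\in E$. Variables $s_v\in\{0,1\}$ and $x_v\in\{0,1,\dots,T\}$ for $v\in V$, $y_a\in\{0,1\}$ for $a\in A$, and $z\in\{0,1,\dots,T\}$, subject to: (i) $s_v+\sum_{a=(u,v)\in A}y_a=1$ for all $v\in V$; (ii) $x_u-x_v+(T+1)y_a\leq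 T$ for all $a=(u,v)\in A$; (iii) $x_w-x_v+(T+1)y_a\leq T$ for all $a=(u,v)\in A$ and $w\in N(u)\setminus\{v\}$; (iv) $x_v-z\leq 0$ for all $v\in V$. *)

theory Defs
  imports Main "HOL-Library.Extended_Nat"
begin

definition simple_graph :: "'a set \<Rightarrow> ('a \<Rightarrow> 'a \<Rightarrow> bool) \<Rightarrow> bool" where
  "simple_graph V E \<longleftrightarrow> finite V \<and> (\<forall>u v. E u v \<longrightarrow> u \<in> V \<and> v \<in> V)
     \<and> (\<forall>u v. E u v \<longrightarrow> E v u) \<and> (\<forall>u. \<not> E u u)"

definition nbhd :: "'a set \<Rightarrow> ('a \<Rightarrow> 'a \<Rightarrow> bool) \<Rightarrow> 'a \<Rightarrow> 'a set" where
  "nbhd V E u = {v \<in> V. E u v}"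

inductive filled :: "'a set \<Rightarrow> ('a \<Rightarrow> 'a \<Rightarrow> bool) \<Rightarrow> 'a set \<Rightarrow> 'a \<Rightarrow> bool"
  for V E C where
  init: "v \<in> C \<Longrightarrow> filled V E C v"
| force: "filled V E C u \<Longrightarrow> v \<in> nbhd V E u \<Longrightarrow>
          (\<forall>w \<in> nbhd V E u - {v}. filled V E C w) \<Longrightarrow> filled V E C v"

definition zero_forcing_set :: "'a set \<Rightarrow> ('a \<Rightarrow> 'a \<Rightarrow> bool) \<Rightarrow> 'a set \<Rightarrow> bool" where
  "zero_forcing_set V E C \<longleftrightarrow> C \<subseteq> V \<and> (\<forall>v \<in> V. filled V E C v)"

text \<open>One parallel propagation step: C^[t] from C^[t-1].\<close>
definition zf_step :: "'a set \<Rightarrow> ('a \<Rightarrow> 'a \<Rightarrow> bool) \<Rightarrow> 'a set \<Rightarrow> 'a set" where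
  "zf_step V E D = D \<union> {v. v \<notin> D \<and> (\<exists>u \<in> D. nbhd V E u - D = {v})}"

definition pt :: "'a set \<Rightarrow> ('a \<Rightarrow> 'a \<Rightarrow> bool) \<Rightarrow> 'a set \<Rightarrow> enat" where
  "pt V E C = (if \<exists>t. (zf_step V E ^^ t) C = V
               then enat (LEAST t. (zf_step V E ^^ t) C = V) else \<infinity>)"

definition th_set :: "'a set \<Rightarrow> ('a \<Rightarrow> 'a \<Rightarrow> bool) \<Rightarrow> 'a set \<Rightarrow> enat" where
  "th_set V E C = enat (card C) + pt V E C"

definition th :: "'a set \<Rightarrow> ('a \<Rightarrow> 'a \<Rightarrow> bool) \<Rightarrow> enat" where
  "th V E = (INF C \<in> Pow V. th_set V E C)"

definition arcs :: "'a set \<Rightarrow> ('a \<Rightarrow> 'a \<Rightarrow> bool) \<Rightarrow> ('a \<times> 'a) set" where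
  "arcs V E = {(u, v). u \<in> V \<and> v \<in> V \<and> E u v}"

definition IM_feasible :: "'a set \<Rightarrow> ('a \<Rightarrow> 'a \<Rightarrow> bool) \<Rightarrow> nat \<Rightarrow>
    ('a \<Rightarrow> int) \<Rightarrow> ('a \<Rightarrow> int) \<Rightarrow> ('a \<times> 'a \<Rightarrow> int) \<Rightarrow> int \<Rightarrow> bool" where
  "IM_feasible V E T s x y z \<longleftrightarrow>
     (\<forall>v \<in> V. s v \<in> {0, 1} \<and> x v \<in> {0 .. int T}) \<and>
     (\<forall>a \<in> arcs V E. y a \<in> {0, 1}) \<and> z \<in> {0 .. int T} \<and>
     (\<forall>v \<in> V. s v + (\<Sum>a \<in> {a \<in> arcs V E. snd a = v}. y a) = 1) \<and>
     (\<forall>(u, v) \<in> arcs V E. x u - x v + (int T + 1) * y (u, v) \<le> int T) \<and>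
     (\<forall>(u, v) \<in> arcs V E. \<forall>w \<in> nbhd V E u - {v}.
         x w - x v + (int T + 1) * y (u, v) \<le> int T) \<and>
     (\<forall>v \<in> V. x v - z \<le> 0)"

definition IM_objective :: "'a set \<Rightarrow> ('a \<Rightarrow> int) \<Rightarrow> int \<Rightarrow> int" where
  "IM_objective V s z = (\<Sum>v \<in> V. s v) + z"

definition IM_optimal :: "'a set \<Rightarrow> ('a \<Rightarrow> 'a \<Rightarrow> bool) \<Rightarrow> nat \<Rightarrow>
    ('a \<Rightarrow> int) \<Rightarrow> ('a \<Rightarrow> int) \<Rightarrow> ('a \<times> 'a \<Rightarrow> int) \<Rightarrow> int \<Rightarrow> bool" where
  "IM_optimal V E T s x y z \<longleftrightarrow> IM_feasible V E T s x y z \<and>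
     (\<forall>s' x' y' z'. IM_feasible V E T s' x' y' z' \<longrightarrow>
        IM_objective V s z \<le> IM_objective V s' z')"

end

theory Submission
  imports Defs
begin

text \<open>
  A feasible solution of IM(G,T) encodes a propagation: every vertex v with s v = 0 has a unique
  chosen arc (u, v), and constraints (ii) and (iii) say that u and all its other neighbours have
  strictly smaller x-value than v. By induction on x-values, every vertex is filled after at most
  z parallel steps from C = {v. s v = 1}, so th(G,C) \<le> |C| + z. Conversely, a set C that fills V
  does so within p \<le> n - 1 = T steps (each step fills a new vertex), and taking x v to be the time at which v is filled and choosing for
  every v \<notin> C one vertex that forces it yields a feasible solution of objective |C| + p.
  Optimality of (s,x,y,z) therefore bounds its objective by th(G,C) for every C.
\<close>

lemma subset_zf_step: "D \<subseteq> zf_step V E D"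
  unfolding zf_step_def by blast

lemma zf_step_subset: "D \<subseteq> V \<Longrightarrow> zf_step V E D \<subseteq> V"
  unfolding zf_step_def nbhd_def by blast

lemma funpow_zf_step_subset: "C \<subseteq> V \<Longrightarrow> (zf_step V E ^^ t) C \<subseteq> V"
  by (induction t) (auto dest: zf_step_subset[of _ V E])

lemma subset_funpow_zf_step: "C \<subseteq> (zf_step V E ^^ t) C"
  by (induction t) (auto simp: zf_step_def)

lemma zf_stepI:
  assumes "u \<in> D" and "v \<in> nbhd V E u" and "nbhd V E u - {v} \<subseteq> D"
  shows "v \<in> zf_step V E D"
proof (cases "v \<in> D")
  case True
  then show ?thesis by (simp add: zf_step_def)
next
  case False
  with assms have "nbhd V E u - D = {v}" by blast
  with False \<open>u \<in> D\<close> show ?thesis unfolding zf_step_def by blast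
qed

lemma funpow_zf_step_fixpoint: "zf_step V E D = D \<Longrightarrow> (zf_step V E ^^ k) D = D"
  by (induction k) auto

lemma filled_if_funpow_zf_step: "v \<in> (zf_step V E ^^ t) C \<Longrightarrow> filled V E C v"
proof (induction t arbitrary: v)
  case 0
  then show ?case by (simp add: filled.init)
next
  case (Suc t)
  let ?D = "(zf_step V E ^^ t) C"
  from Suc.prems consider "v \<in> ?D" | u where "u \<in> ?D" "nbhd V E u - ?D = {v}"
    unfolding zf_step_def by auto
  then show ?case
  proof cases
    case 2
    then show ?thesis
      using filled.force[of V E C u v] Suc.IH by blast
  qed (use Suc.IH in blast)
qed

lemma zero_forcing_set_if_reaches:
  assumes "C \<subseteq> V" and reach: "(zf_step V E ^^ n) C = V"
  shows "zero_forcing_set V E C"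
  unfolding zero_forcing_set_def
proof (intro conjI ballI)
  fix v assume "v \<in> V"
  with reach have "v \<in> (zf_step V E ^^ n) C" by simp
  then show "filled V E C v" by (rule filled_if_funpow_zf_step)
qed (rule \<open>C \<subseteq> V\<close>)

lemma th_set_le_if_reaches:
  assumes "(zf_step V E ^^ n) C = V"
  shows "th_set V E C \<le> enat (card C + n)"
proof -
  have "pt V E C = enat (LEAST t. (zf_step V E ^^ t) C = V)"
    using assms unfolding pt_def by auto
  also have "\<dots> \<le> enat n"
    using assms by (simp add: Least_le)
  finally show ?thesis
    unfolding th_set_def by (metis add_left_mono plus_enat_simps(1))
qed

lemma th_set_eq_Least:
  assumes "(zf_step V E ^^ n) C = V"
  shows "th_set V E C = enat (card C + (LEAST t. (zf_step V E ^^ t) C = V))"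
  using assms unfolding th_set_def pt_def by auto

lemma th_eq_th_set_if_minimal:
  assumes "C \<subseteq> V" and "\<And>C'. C' \<subseteq> V \<Longrightarrow> th_set V E C \<le> th_set V E C'"
  shows "th V E = th_set V E C"
  unfolding th_def
proof (rule antisym)
  show "(INF C \<in> Pow V. th_set V E C) \<le> th_set V E C"
    using assms(1) by (intro INF_lower) simp
  show "th_set V E C \<le> (INF C \<in> Pow V. th_set V E C)"
    using assms(2) by (intro INF_greatest) simp
qed

lemma card_add_le_card_if_reaches:
  assumes "finite V" and "C \<subseteq> V" and reach: "(zf_step V E ^^ p) C = V"
    and minimal: "\<forall>t<p. (zf_step V E ^^ t) C \<noteq> V"
  shows "card C + p \<le> card V"
proof -
  let ?it = "\<lambda>t. (zf_step V E ^^ t) C"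
  have strict: "?it t \<subset> ?it (Suc t)" if "t < p" for t
  proof -
    have "?it t \<subseteq> ?it (Suc t)" by (simp add: subset_zf_step)
    moreover have "?it (Suc t) \<noteq> ?it t"
    proof
      assume "?it (Suc t) = ?it t"
      then have "(zf_step V E ^^ (p - t)) (?it t) = ?it t"
        by (intro funpow_zf_step_fixpoint) simp
      moreover have "?it p = (zf_step V E ^^ (p - t)) (?it t)"
        using \<open>t < p\<close> by (metis funpow_add le_add_diff_inverse2 less_imp_le o_apply)
      ultimately have "?it t = V" using reach by simp
      with minimal \<open>t < p\<close> show False by blast
    qed
    ultimately show ?thesis by blast
  qed
  have "card C + t \<le> card (?it t)" if "t \<le> p" for t
    using that
  proof (induction t)
    case (Suc t)
    have "finite (?it (Suc t))"
      using funpow_zf_step_subset[OF \<open>C \<subseteq> V\<close>] \<open>finite V\<close> by (rule finite_subset)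
    then have "card (?it t) < card (?it (Suc t))"
      using strict Suc.prems by (simp add: psubset_card_mono)
    with Suc show ?case by simp
  qed simp
  from this[of p] reach show ?thesis by simp
qed

lemma Least_reaches_le_card:
  assumes "finite V" and "C \<subseteq> V" and reach: "(zf_step V E ^^ n) C = V"
  shows "(LEAST t. (zf_step V E ^^ t) C = V) \<le> card V - 1"
proof -
  define p where "p = (LEAST t. (zf_step V E ^^ t) C = V)"
  have "(zf_step V E ^^ p) C = V"
    unfolding p_def using reach by (rule LeastI)
  moreover have "\<forall>t<p. (zf_step V E ^^ t) C \<noteq> V"
    unfolding p_def using not_less_Least by blast
  ultimately have card_le: "card C + p \<le> card V"
    using assms by (intro card_add_le_card_if_reaches)
  show ?thesis
  proof (cases "C = {}")
    case True
    then have "V = {}"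
      using reach funpow_zf_step_fixpoint[of V E "{}" n] by (simp add: zf_step_def)
    with card_le show ?thesis by (simp add: p_def)
  next
    case False
    then have "card C \<ge> 1"
      using assms(1,2) by (meson card_0_eq finite_subset less_one not_le)
    with card_le show ?thesis by (simp add: p_def)
  qed
qed

definition fill_time :: "'a set \<Rightarrow> ('a \<Rightarrow> 'a \<Rightarrow> bool) \<Rightarrow> 'a set \<Rightarrow> 'a \<Rightarrow> nat" where
  "fill_time V E C v = (LEAST t. v \<in> (zf_step V E ^^ t) C)"

text \<open>The choice is only meaningful for a filled vertex outside C; otherwise it is arbitrary.\<close>
definition forcer :: "'a set \<Rightarrow> ('a \<Rightarrow> 'a \<Rightarrow> bool) \<Rightarrow> 'a set \<Rightarrow> 'a \<Rightarrow> 'a" where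
  "forcer V E C v = (SOME u. u \<in> (zf_step V E ^^ (fill_time V E C v - 1)) C
     \<and> nbhd V E u - (zf_step V E ^^ (fill_time V E C v - 1)) C = {v})"

lemma fill_time_le: "v \<in> (zf_step V E ^^ t) C \<Longrightarrow> fill_time V E C v \<le> t"
  unfolding fill_time_def by (rule Least_le)

lemma forcer_forces:
  assumes "v \<in> (zf_step V E ^^ t) C" and "v \<notin> C"
  defines "k \<equiv> fill_time V E C v - 1"
  shows "fill_time V E C v = Suc k"
    and "forcer V E C v \<in> (zf_step V E ^^ k) C"
    and "nbhd V E (forcer V E C v) - (zf_step V E ^^ k) C = {v}"
proof -
  have filled_at: "v \<in> (zf_step V E ^^ fill_time V E C v) C"
    unfolding fill_time_def using assms(1) by (rule LeastI)
  with \<open>v \<notin> C\<close> have "fill_time V E C v \<noteq> 0" by (metis funpow_0)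
  then show Suc_k: "fill_time V E C v = Suc k"
    unfolding k_def by simp
  have "v \<notin> (zf_step V E ^^ k) C"
    using fill_time_le[where t = k] Suc_k by fastforce
  moreover have "v \<in> zf_step V E ((zf_step V E ^^ k) C)"
    using filled_at Suc_k by simp
  ultimately have "\<exists>u. u \<in> (zf_step V E ^^ k) C \<and> nbhd V E u - (zf_step V E ^^ k) C = {v}"
    unfolding zf_step_def[of V E "(zf_step V E ^^ k) C"] by blast
  then have "forcer V E C v \<in> (zf_step V E ^^ k) C
      \<and> nbhd V E (forcer V E C v) - (zf_step V E ^^ k) C = {v}"
    unfolding forcer_def k_def by (rule someI_ex)
  then show "forcer V E C v \<in> (zf_step V E ^^ k) C"
    and "nbhd V E (forcer V E C v) - (zf_step V E ^^ k) C = {v}"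
    by blast+
qed

lemma forcer_adjacent:
  assumes "v \<in> (zf_step V E ^^ t) C" and "v \<notin> C"
  shows "v \<in> nbhd V E (forcer V E C v)"
  using forcer_forces(3)[OF assms] by blast

lemma fill_time_forcer_less:
  assumes "v \<in> (zf_step V E ^^ t) C" and "v \<notin> C"
  shows "fill_time V E C (forcer V E C v) < fill_time V E C v"
proof -
  have "fill_time V E C (forcer V E C v) \<le> fill_time V E C v - 1"
    using forcer_forces(2)[OF assms] by (rule fill_time_le)
  with forcer_forces(1)[OF assms] show ?thesis by simp
qed

lemma fill_time_nbhd_forcer_less:
  assumes "v \<in> (zf_step V E ^^ t) C" and "v \<notin> C" and "w \<in> nbhd V E (forcer V E C v) - {v}"
  shows "fill_time V E C w < fill_time V E C v"
proof -
  have "w \<in> (zf_step V E ^^ (fill_time V E C v - 1)) C"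
    using forcer_forces(3)[OF assms(1,2)] assms(3) by blast
  then have "fill_time V E C w \<le> fill_time V E C v - 1"
    by (rule fill_time_le)
  with forcer_forces(1)[OF assms(1,2)] show ?thesis by simp
qed

lemma IM_feasible_chosen_arc:
  assumes feas: "IM_feasible V E T s x y z" and "v \<in> V" and "s v \<noteq> 1"
  obtains u where "(u, v) \<in> arcs V E" and "x u < x v"
    and "\<forall>w \<in> nbhd V E u - {v}. x w < x v"
proof -
  have "s v = 0" and "s v + (\<Sum>a \<in> {a \<in> arcs V E. snd a = v}. y a) = 1"
    using feas \<open>v \<in> V\<close> \<open>s v \<noteq> 1\<close> unfolding IM_feasible_def by auto
  then have "(\<Sum>a \<in> {a \<in> arcs V E. snd a = v}. y a) \<noteq> 0"
    by simp
  then obtain a where a: "a \<in> arcs V E" "snd a = v" and "y a \<noteq> 0"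
    using sum.neutral[of "{a \<in> arcs V E. snd a = v}" y] by blast
  then have "y a = 1"
    using feas unfolding IM_feasible_def by auto
  obtain u where a_eq: "a = (u, v)"
    using \<open>snd a = v\<close> by (cases a) auto
  have arc: "(u, v) \<in> arcs V E"
    using a(1) a_eq by simp
  have "x u - x v + (int T + 1) * y (u, v) \<le> int T"
    and "\<forall>w \<in> nbhd V E u - {v}. x w - x v + (int T + 1) * y (u, v) \<le> int T"
    using feas arc unfolding IM_feasible_def by blast+
  with \<open>y a = 1\<close> have "x u < x v" and "\<forall>w \<in> nbhd V E u - {v}. x w < x v"
    unfolding a_eq by force+
  with arc show ?thesis
    by (rule that)
qed

lemma IM_feasible_reaches:
  assumes feas: "IM_feasible V E T s x y z"
  shows "v \<in> V \<Longrightarrow> x v \<le> int n \<Longrightarrow> v \<in> (zf_step V E ^^ n) {v \<in> V. s v = 1}"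
proof (induction n arbitrary: v)
  case 0
  have "s v = 1"
  proof (rule ccontr)
    assume "s v \<noteq> 1"
    then obtain u where "(u, v) \<in> arcs V E" and "x u < x v"
      using IM_feasible_chosen_arc[OF feas \<open>v \<in> V\<close>] by blast
    moreover have "u \<in> V \<Longrightarrow> 0 \<le> x u"
      using feas unfolding IM_feasible_def by simp
    ultimately show False
      using "0.prems"(2) by (simp add: arcs_def)
  qed
  with "0.prems" show ?case by simp
next
  case (Suc n)
  let ?D = "(zf_step V E ^^ n) {v \<in> V. s v = 1}"
  show ?case
  proof (cases "s v = 1")
    case True
    with Suc.prems have "v \<in> {v \<in> V. s v = 1}" by simp
    then show ?thesis by (rule subsetD[OF subset_funpow_zf_step])
  next
    case False
    then obtain u where arc: "(u, v) \<in> arcs V E" and "x u < x v"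
      and others: "\<forall>w \<in> nbhd V E u - {v}. x w < x v"
      using IM_feasible_chosen_arc[OF feas \<open>v \<in> V\<close>] by blast
    have "u \<in> V" and "v \<in> nbhd V E u"
      using arc by (simp_all add: arcs_def nbhd_def)
    moreover have "u \<in> ?D"
      using Suc.IH[OF \<open>u \<in> V\<close>] \<open>x u < x v\<close> Suc.prems(2) by simp
    moreover have "nbhd V E u - {v} \<subseteq> ?D"
    proof
      fix w assume w: "w \<in> nbhd V E u - {v}"
      then have "w \<in> V" and "x w < x v"
        using others by (simp_all add: nbhd_def)
      then show "w \<in> ?D"
        using Suc.IH Suc.prems(2) by simp
    qed
    ultimately show ?thesis
      by (simp add: zf_stepI)
  qed
qed

lemma IM_feasible_reaches_in_z:
  assumes feas: "IM_feasible V E T s x y z"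
  shows "(zf_step V E ^^ nat z) {v \<in> V. s v = 1} = V"
proof
  show "(zf_step V E ^^ nat z) {v \<in> V. s v = 1} \<subseteq> V"
    by (rule funpow_zf_step_subset) blast
  have "\<forall>v \<in> V. x v \<le> z" and "0 \<le> z"
    using feas unfolding IM_feasible_def by auto
  then show "V \<subseteq> (zf_step V E ^^ nat z) {v \<in> V. s v = 1}"
    using IM_feasible_reaches[OF feas] by auto
qed

lemma IM_objective_eq_card:
  assumes "finite V" and feas: "IM_feasible V E T s x y z"
  shows "IM_objective V s z = int (card {v \<in> V. s v = 1}) + z"
proof -
  have "(\<Sum>v \<in> V. s v) = (\<Sum>v \<in> V. of_bool (s v = 1))"
    using feas unfolding IM_feasible_def by (intro sum.cong) auto
  also have "\<dots> = int (card {v \<in> V. s v = 1})"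
    using \<open>finite V\<close> by (simp add: Int_def)
  finally show ?thesis
    unfolding IM_objective_def by simp
qed

lemma IM_feasible_th_set_le:
  assumes "finite V" and feas: "IM_feasible V E T s x y z"
  shows "th_set V E {v \<in> V. s v = 1} \<le> enat (nat (IM_objective V s z))"
proof -
  have "th_set V E {v \<in> V. s v = 1} \<le> enat (card {v \<in> V. s v = 1} + nat z)"
    using IM_feasible_reaches_in_z[OF feas] by (rule th_set_le_if_reaches)
  also have "\<dots> = enat (nat (IM_objective V s z))"
    using IM_objective_eq_card[OF assms] feas unfolding IM_feasible_def
    by (simp add: nat_add_distrib)
  finally show ?thesis .
qed

lemma IM_feasible_fill_times:
  assumes "simple_graph V E" and "C \<subseteq> V" and reach: "(zf_step V E ^^ p) C = V"
    and "p \<le> T"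
  shows "IM_feasible V E T (\<lambda>v. of_bool (v \<in> C)) (\<lambda>v. int (fill_time V E C v))
    (\<lambda>(u, v). of_bool (v \<notin> C \<and> u = forcer V E C v)) (int p)"
    (is "IM_feasible V E T ?s ?x ?y ?z")
proof -
  have reached: "v \<in> (zf_step V E ^^ p) C" if "v \<in> V" for v
    using reach that by simp
  have x_le: "?x v \<le> int p" if "v \<in> V" for v
    using fill_time_le[OF reached[OF that]] by simp
  have in_arcs: "(u, v) \<in> arcs V E \<longleftrightarrow> v \<in> nbhd V E u" for u v
    using \<open>simple_graph V E\<close> unfolding simple_graph_def arcs_def nbhd_def by auto
  have "finite (arcs V E)"
    using \<open>simple_graph V E\<close> unfolding simple_graph_def arcs_def
    by (auto intro: finite_subset[of _ "V \<times> V"])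
  have in_degree: "?s v + (\<Sum>a \<in> {a \<in> arcs V E. snd a = v}. ?y a) = 1" if "v \<in> V" for v
  proof (cases "v \<in> C")
    case True
    then show ?thesis by (auto intro: sum.neutral)
  next
    case False
    have "(\<Sum>a \<in> {a \<in> arcs V E. snd a = v}. ?y a)
        = (\<Sum>a \<in> {a \<in> arcs V E. snd a = v}. if a = (forcer V E C v, v) then 1 else 0)"
      using False by (intro sum.cong) auto
    also have "\<dots> = 1"
      using \<open>finite (arcs V E)\<close> forcer_adjacent[OF reached[OF \<open>v \<in> V\<close>] False] in_arcs
      by simp
    finally show ?thesis
      using False by simp
  qed
  have arc_ineq: "?x w - ?x v + (int T + 1) * ?y (u, v) \<le> int T"
    if "(u, v) \<in> arcs V E" and "w = u \<or> w \<in> nbhd V E u - {v}" for u v w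
  proof (cases "v \<notin> C \<and> u = forcer V E C v")
    case True
    then have "v \<notin> C" and u_eq: "u = forcer V E C v" by simp_all
    have v_reached: "v \<in> (zf_step V E ^^ p) C"
      using that(1) reached unfolding arcs_def by simp
    from that(2) have "fill_time V E C w < fill_time V E C v"
    proof
      assume "w = u"
      then show ?thesis
        using fill_time_forcer_less[OF v_reached \<open>v \<notin> C\<close>] u_eq by simp
    next
      assume "w \<in> nbhd V E u - {v}"
      then show ?thesis
        using fill_time_nbhd_forcer_less[OF v_reached \<open>v \<notin> C\<close>] u_eq by simp
    qed
    with True show ?thesis by simp
  next
    case False
    have "w \<in> V"
      using that unfolding arcs_def nbhd_def by auto
    with x_le \<open>p \<le> T\<close> have "?x w \<le> int T" by fastforce
    with False show ?thesis by auto
  qed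
  show ?thesis
    unfolding IM_feasible_def using x_le \<open>p \<le> T\<close> in_degree arc_ineq by fastforce
qed

lemma IM_optimal_le_th_set:
  assumes "simple_graph V E" and opt: "IM_optimal V E (card V - 1) s x y z" and "C \<subseteq> V"
  shows "enat (nat (IM_objective V s z)) \<le> th_set V E C"
proof (cases "\<exists>t. (zf_step V E ^^ t) C = V")
  case True
  define p where "p = (LEAST t. (zf_step V E ^^ t) C = V)"
  have "finite V"
    using \<open>simple_graph V E\<close> unfolding simple_graph_def by blast
  have reach: "(zf_step V E ^^ p) C = V"
    unfolding p_def using True by (rule LeastI_ex)
  have "p \<le> card V - 1"
    unfolding p_def using \<open>finite V\<close> \<open>C \<subseteq> V\<close> reach by (rule Least_reaches_le_card)
  with assms(1,3) reach have "IM_feasible V E (card V - 1) (\<lambda>v. of_bool (v \<in> C))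
      (\<lambda>v. int (fill_time V E C v)) (\<lambda>(u, v). of_bool (v \<notin> C \<and> u = forcer V E C v)) (int p)"
    by (rule IM_feasible_fill_times)
  with opt[unfolded IM_optimal_def, THEN conjunct2, rule_format]
  have "IM_objective V s z \<le> IM_objective V (\<lambda>v. of_bool (v \<in> C)) (int p)" .
  also have "\<dots> = int (card C + p)"
    using \<open>finite V\<close> \<open>C \<subseteq> V\<close> unfolding IM_objective_def by (simp add: Int_absorb1)
  finally show ?thesis
    using th_set_eq_Least[OF reach] by (simp add: p_def)
next
  case False
  then show ?thesis
    unfolding th_set_def pt_def by simp
qed

theorem corollary3p5:
  fixes V :: "'a set" and E :: "'a \<Rightarrow> 'a \<Rightarrow> bool"
    and s x :: "'a \<Rightarrow> int" and y :: "'a \<times> 'a \<Rightarrow> int" and z :: int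
  assumes "simple_graph V E"
    and "IM_optimal V E (card V - 1) s x y z"
  shows "zero_forcing_set V E {v \<in> V. s v = 1}
    \<and> th V E = th_set V E {v \<in> V. s v = 1}
    \<and> th_set V E {v \<in> V. s v = 1} = enat (nat (IM_objective V s z))"
proof -
  let ?C = "{v \<in> V. s v = 1}"
  have "finite V"
    using assms(1) unfolding simple_graph_def by blast
  have feas: "IM_feasible V E (card V - 1) s x y z"
    using assms(2) unfolding IM_optimal_def by blast
  have th_set_eq: "th_set V E ?C = enat (nat (IM_objective V s z))"
    using IM_feasible_th_set_le[OF \<open>finite V\<close> feas] IM_optimal_le_th_set[OF assms, of ?C]
    by simp
  have "zero_forcing_set V E ?C"
    by (rule zero_forcing_set_if_reaches[OF _ IM_feasible_reaches_in_z[OF feas]]) blast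
  moreover have "th V E = th_set V E ?C"
    using IM_optimal_le_th_set[OF assms] th_set_eq by (intro th_eq_th_set_if_minimal) simp_all
  ultimately show ?thesis
    using th_set_eq by blast
qed

end
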